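(* Under the standing assumptions below, let $S:V^*\to V$ be the solution operator of the variational inequality $w\in K$, $\langle Aw-z,v-w\rangle_V\ge0$ for all $v\in K$ (mapping $z\in V^*$ to $w$). Then for every $u\in V^*$ and every $G\in\partial_B^{sw}S(u)$, it holds $\langle z,Gz\rangle_V\ge0$ for all $z\in V^*$.
   Context: Standing assumptions: $(\Omega,\Sigma,\mu)$ is a complete finite measure space. $V$ is a real separable Hilbert space with $V\hookrightarrow L^2(\Omega)$ continuously, compactly and densely, and $[v]_{a_1}^{a_2}:=\min(a_2,\max(a_1,v))\in V$ for all $v\in V$, $a_1\le0\le a_2$ in $[-\infty,\infty]$. $A\in\mathcal{L}(V,V^* )$ is symmetric, satisfies $\langle Av,v\rangle_V\ge c\|v\|_V^2$ ($c>0$) and $\min(\langle Av,[v]_{a_1}^{a_2}\rangle_V,\langle A[v]_{a_1}^{a_2},v\rangle_V)\ge\langle A[v]_{a_1}^{a_2},[v]_{a_1}^{a_2}\rangle_V$ for all $v\in V$, $a_1\le0\le a_2$. $K\subset V$ is nonempty, closed, convex with $v\in K,z\in V\Rightarrow v+\max(0,z)\in K$ and $v_1,v_2\in K\Rightarrow\min(v_1,v_2)\in K$. The VI has a unique solution for each $z\in V^*$ and $S$ is globally Lipschitz. $S$ is Gâteaux differentiable at $u\in V^*$ if for all $z\in V^*$ the limit $S'(u;z):=\lim_{t\to0^+}(S(u+tz)-S(u))/t$ exists in $V$ and $z\mapsto S'(u;z)$ is linear and continuous; $\mathcal{D}_S$ is the set of such points. $\partial_B^{sw}S(u):=\{G\in\mathcal{L}(V^*,V):\exists\{u_n\}\subset\mathcal{D}_S,\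 u_n\to u\text{ in }V^*,\ S'(u_n)z\rightharpoonup Gz\text{ weakly in }V\ \forall z\in V^*\}$. *)

theory Defs
  imports "HOL-Analysis.Analysis"
begin

(* The dual space V* is modelled as the type of bounded linear functionals
  'v =>L real, with the operator norm; the duality pairing is application. *)

definition sq_int :: "'a measure \<Rightarrow> ('a \<Rightarrow> real) \<Rightarrow> bool" where
  "sq_int M f \<longleftrightarrow> f \<in> borel_measurable M \<and> integrable M (\<lambda>x. (f x)\<^sup>2)"

definition L2_dist2 :: "'a measure \<Rightarrow> ('a \<Rightarrow> real) \<Rightarrow> ('a \<Rightarrow> real) \<Rightarrow> real" where
  "L2_dist2 M f g = (\<integral>x. (f x - g x)\<^sup>2 \<partial>M)"

definition complete_measure_space :: "'a measure \<Rightarrow> bool" where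
  "complete_measure_space M \<longleftrightarrow> (\<forall>N\<in>null_sets M. \<forall>B. B \<subseteq> N \<longrightarrow> B \<in> sets M)"

definition trunc_val :: "ereal \<Rightarrow> ereal \<Rightarrow> real \<Rightarrow> real" where
  "trunc_val a1 a2 r = real_of_ereal (min a2 (max a1 (ereal r)))"

definition weakly_tendsto :: "(nat \<Rightarrow> 'v::real_normed_vector) \<Rightarrow> 'v \<Rightarrow> bool" where
  "weakly_tendsto xs x \<longleftrightarrow> (\<forall>\<phi>::'v \<Rightarrow>\<^sub>L real. (\<lambda>n. \<phi> (xs n)) \<longlonglongrightarrow> \<phi> x)"

definition gateaux_at ::
  "(('v::real_normed_vector \<Rightarrow>\<^sub>L real) \<Rightarrow> 'v) \<Rightarrow> ('v \<Rightarrow>\<^sub>L real) \<Rightarrow> (('v \<Rightarrow>\<^sub>L real) \<Rightarrow> 'v) \<Rightarrow> bool" where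
  "gateaux_at S u D \<longleftrightarrow> bounded_linear D \<and>
     (\<forall>z. ((\<lambda>t. (S (u + t *\<^sub>R z) - S u) /\<^sub>R t) \<longlongrightarrow> D z) (at_right 0))"

definition gateaux_points :: "(('v::real_normed_vector \<Rightarrow>\<^sub>L real) \<Rightarrow> 'v) \<Rightarrow> ('v \<Rightarrow>\<^sub>L real) set" where
  "gateaux_points S = {u. \<exists>D. gateaux_at S u D}"

definition bouligand_sw ::
  "(('v::real_normed_vector \<Rightarrow>\<^sub>L real) \<Rightarrow> 'v) \<Rightarrow> ('v \<Rightarrow>\<^sub>L real) \<Rightarrow> (('v \<Rightarrow>\<^sub>L real) \<Rightarrow> 'v) set" where
  "bouligand_sw S u = {G. bounded_linear G \<and>
     (\<exists>us Ds. (\<forall>n. us n \<in> gateaux_points S \<and> gateaux_at S (us n) (Ds n)) \<and>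
              us \<longlonglongrightarrow> u \<and> (\<forall>z. weakly_tendsto (\<lambda>n. Ds n z) (G z)))}"

end

theory Submission
  imports Defs
begin

text \<open>The solution operator of a variational inequality with a positive operator is monotone:
  testing the inequality for S z1 with S z2 and vice versa and adding gives
  (z1 - z2)(S z1 - S z2) \<ge> A (S z1 - S z2) (S z1 - S z2) \<ge> 0.
  Difference quotients of a monotone map in direction z are paired nonnegatively with z, so
  every Gateaux derivative is monotone, and this survives weak limits of derivatives.\<close>

lemma vi_solutions_monotone:
  fixes A :: "'v::real_normed_vector \<Rightarrow>\<^sub>L ('v \<Rightarrow>\<^sub>L real)"
  assumes sol1: "w1 \<in> K" "\<forall>v\<in>K. (A w1 - z1) (v - w1) \<ge> 0"
    and sol2: "w2 \<in> K" "\<forall>v\<in>K. (A w2 - z2) (v - w2) \<ge> 0"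
    and A_pos: "A (w1 - w2) (w1 - w2) \<ge> 0"
  shows "(z1 - z2) (w1 - w2) \<ge> 0"
proof -
  have "(A w1 - z1) (w2 - w1) \<ge> 0" "(A w2 - z2) (w1 - w2) \<ge> 0"
    using sol1 sol2 by blast+
  with A_pos show ?thesis
    by (simp add: blinfun.diff_left blinfun.diff_right algebra_simps)
qed

lemma gateaux_derivative_monotone:
  fixes S :: "('v::real_normed_vector \<Rightarrow>\<^sub>L real) \<Rightarrow> 'v"
  assumes mono: "\<And>z1 z2. (z1 - z2) (S z1 - S z2) \<ge> 0"
    and D: "gateaux_at S u D"
  shows "z (D z) \<ge> 0"
proof -
  have "((\<lambda>t. (S (u + t *\<^sub>R z) - S u) /\<^sub>R t) \<longlongrightarrow> D z) (at_right 0)"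
    using D unfolding gateaux_at_def by blast
  then have lim: "((\<lambda>t. z ((S (u + t *\<^sub>R z) - S u) /\<^sub>R t)) \<longlongrightarrow> z (D z)) (at_right 0)"
    by (rule bounded_linear.tendsto[OF blinfun.bounded_linear_right])
  have quotient_nonneg: "0 \<le> z ((S (u + t *\<^sub>R z) - S u) /\<^sub>R t)" if "t > 0" for t
  proof -
    have "0 \<le> ((u + t *\<^sub>R z) - u) (S (u + t *\<^sub>R z) - S u)"
      by (rule mono)
    then have "0 \<le> t * z (S (u + t *\<^sub>R z) - S u)"
      by (simp add: blinfun.scaleR_left)
    with \<open>t > 0\<close> show ?thesis
      by (simp add: blinfun.scaleR_right zero_le_mult_iff)
  qed
  have "eventually (\<lambda>t. 0 \<le> z ((S (u + t *\<^sub>R z) - S u) /\<^sub>R t)) (at_right (0::real))"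
    using eventually_at_right_less[of "0::real"] by (auto intro: quotient_nonneg elim: eventually_mono)
  from tendsto_lowerbound[OF lim this] show ?thesis
    by simp
qed

lemma bouligand_sw_monotone:
  fixes S :: "('v::real_normed_vector \<Rightarrow>\<^sub>L real) \<Rightarrow> 'v"
  assumes mono: "\<And>z1 z2. (z1 - z2) (S z1 - S z2) \<ge> 0"
    and G: "G \<in> bouligand_sw S u"
  shows "z (G z) \<ge> 0"
proof -
  obtain us Ds where Ds: "\<And>n. gateaux_at S (us n) (Ds n)"
    and weak: "\<And>z. weakly_tendsto (\<lambda>n. Ds n z) (G z)"
    using G unfolding bouligand_sw_def by blast
  have "(\<lambda>n. z (Ds n z)) \<longlonglongrightarrow> z (G z)"
    using weak unfolding weakly_tendsto_def by blast
  moreover have "\<And>n. 0 \<le> z (Ds n z)"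
    using gateaux_derivative_monotone[OF mono Ds] .
  ultimately show ?thesis
    by (simp add: LIMSEQ_le_const)
qed

theorem mainTheorem15:
  fixes M :: "'a measure"
    and \<iota> :: "'v::{real_inner, complete_space} \<Rightarrow> 'a \<Rightarrow> real"
    and A :: "'v \<Rightarrow>\<^sub>L ('v \<Rightarrow>\<^sub>L real)"
    and K :: "'v set"
    and S :: "('v \<Rightarrow>\<^sub>L real) \<Rightarrow> 'v"
    and u :: "'v \<Rightarrow>\<^sub>L real"
    and G :: "('v \<Rightarrow>\<^sub>L real) \<Rightarrow> 'v"
  assumes fin: "finite_measure M"
    and compl: "complete_measure_space M"
    and separable: "\<exists>D::'v set. countable D \<and> closure D = UNIV"
    and emb_L2: "\<forall>v. sq_int M (\<iota> v)"
    and emb_linear: "\<forall>a b v w. AE x in M. \<iota> (a *\<^sub>R v + b *\<^sub>R w) x = a * \<iota> v x + b * \<iota> w x"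
    and emb_inj: "\<forall>v w. (AE x in M. \<iota> v x = \<iota> w x) \<longrightarrow> v = w"
    and emb_cont: "\<exists>C. \<forall>v. sqrt (L2_dist2 M (\<iota> v) (\<lambda>x. 0)) \<le> C * norm v"
    and emb_compact: "\<forall>vs::nat \<Rightarrow> 'v. bounded (range vs) \<longrightarrow>
         (\<exists>r f. strict_mono r \<and> sq_int M f \<and> (\<lambda>n. L2_dist2 M (\<iota> (vs (r n))) f) \<longlonglongrightarrow> 0)"
    and emb_dense: "\<forall>f. sq_int M f \<longrightarrow> (\<forall>\<epsilon>>0. \<exists>v. L2_dist2 M (\<iota> v) f < \<epsilon>)"
    and trunc_closed: "\<forall>v a1 a2. a1 \<le> 0 \<and> 0 \<le> a2 \<longrightarrow>
         (\<exists>w. AE x in M. \<iota> w x = trunc_val a1 a2 (\<iota> v x))"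
    and A_sym: "\<forall>v w. A v w = A w v"
    and A_coercive: "\<exists>c>0. \<forall>v. A v v \<ge> c * (norm v)\<^sup>2"
    and A_trunc: "\<forall>v w a1 a2. a1 \<le> 0 \<and> 0 \<le> a2 \<and>
         (AE x in M. \<iota> w x = trunc_val a1 a2 (\<iota> v x)) \<longrightarrow> min (A v w) (A w v) \<ge> A w w"
    and K_ne: "K \<noteq> {}"
    and K_closed: "closed K"
    and K_convex: "convex K"
    and K_plus_pos: "\<forall>v z w. v \<in> K \<and> (AE x in M. \<iota> w x = max 0 (\<iota> z x)) \<longrightarrow> v + w \<in> K"
    and K_min: "\<forall>v1 v2 w. v1 \<in> K \<and> v2 \<in> K \<and> (AE x in M. \<iota> w x = min (\<iota> v1 x) (\<iota> v2 x))
         \<longrightarrow> w \<in> K"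
    and S_sol: "\<forall>z w. (w \<in> K \<and> (\<forall>v\<in>K. (A w - z) (v - w) \<ge> 0)) \<longleftrightarrow> w = S z"
    and S_lip: "\<exists>L. \<forall>z1 z2. norm (S z1 - S z2) \<le> L * norm (z1 - z2)"
    and G_in: "G \<in> bouligand_sw S u"
  shows "\<forall>z. z (G z) \<ge> 0"
proof -
  obtain c where "c > 0" and coercive: "\<And>v. A v v \<ge> c * (norm v)\<^sup>2"
    using A_coercive by blast
  have A_pos: "A v v \<ge> 0" for v
    by (rule order_trans[OF _ coercive]) (simp add: \<open>c > 0\<close> less_imp_le)
  have S_mono: "(z1 - z2) (S z1 - S z2) \<ge> 0" for z1 z2
  proof (rule vi_solutions_monotone[where K = K and A = A])
    show "S z1 \<in> K" "\<forall>v\<in>K. (A (S z1) - z1) (v - S z1) \<ge> 0"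
      and "S z2 \<in> K" "\<forall>v\<in>K. (A (S z2) - z2) (v - S z2) \<ge> 0"
      using S_sol by blast+
  qed (rule A_pos)
  show ?thesis
    using bouligand_sw_monotone[OF S_mono G_in] by blast
qed

end
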